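(* Let $K\subset K'$ be compact and connected subgroups of $U(N)$ and let $A\in\mathbb{C}^{N\times N}$. (a) $W_K(C,A)$ is rotationally symmetric for all $C\in\mathbb{C}^{N\times N}$ if and only if the orbit $\mathcal{O}_K(A)$ is weakly rotationally symmetric. (b) If $W_K(C,A)$ is rotationally symmetric for all $C\in\mathbb{C}^{N\times N}$, then $W_{K'}(C,A)$ is rotationally symmetric for all $C\in\mathbb{C}^{N\times N}$.
   Context: For a compact connected subgroup $K\subset U(N)$ and $C,A\in\mathbb{C}^{N\times N}$: $W_K(C,A)=\{\mathrm{tr}(C^\dagger UAU^\dagger)\mid U\in K\}$ and $\mathcal{O}_K(A)=\{UAU^\dagger\mid U\in K\}$. A subset $W\subset\mathbb{C}$ is rotationally symmetric if $e^{i\varphi}W=W$ for all $\varphi\in\mathbb{R}$; the orbit $\mathcal{O}_K(A)$ is weakly rotationally symmetric if $e^{i\varphi}\mathcal{O}_K(A)=\mathcal{O}_K(A)$ for all $\varphi\in\mathbb{R}$. *)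

theory Defs
  imports "HOL-Analysis.Analysis"
begin

definition ctrans :: "complex^'n^'n \<Rightarrow> complex^'n^'n" where
  "ctrans A = (\<chi> i j. cnj (A $ j $ i))"

definition unitary_group :: "(complex^'n^'n) set" where
  "unitary_group = {U. U ** ctrans U = mat 1 \<and> ctrans U ** U = mat 1}"

definition compact_connected_subgroup :: "(complex^'n^'n) set \<Rightarrow> bool" where
  "compact_connected_subgroup K \<longleftrightarrow>
     K \<subseteq> unitary_group \<and> mat 1 \<in> K \<and>
     (\<forall>U\<in>K. \<forall>V\<in>K. U ** V \<in> K) \<and> (\<forall>U\<in>K. ctrans U \<in> K) \<and>
     compact K \<and> connected K"

definition W_K :: "(complex^'n^'n) set \<Rightarrow> complex^'n^'n \<Rightarrow> complex^'n^'n \<Rightarrow> complex set" where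
  "W_K K C A = {trace (ctrans C ** U ** A ** ctrans U) | U. U \<in> K}"

definition orbit_K :: "(complex^'n^'n) set \<Rightarrow> complex^'n^'n \<Rightarrow> (complex^'n^'n) set" where
  "orbit_K K A = {U ** A ** ctrans U | U. U \<in> K}"

definition rot_symmetric :: "complex set \<Rightarrow> bool" where
  "rot_symmetric W \<longleftrightarrow> (\<forall>\<phi>::real. (\<lambda>z. cis \<phi> * z) ` W = W)"

definition weakly_rot_symmetric_orbit :: "(complex^'n^'n) set \<Rightarrow> bool" where
  "weakly_rot_symmetric_orbit Orb \<longleftrightarrow> (\<forall>\<phi>::real. (\<lambda>X. (\<chi> i j. cis \<phi> * X $ i $ j)) ` Orb = Orb)"

end

theory Submission
  imports Defs
begin

text \<open>
  All three properties are equivalent to \<open>e\<^sup>i\<^sup>\<phi> A \<in> \<O>\<^sub>K(A)\<close> for every \<open>\<phi>\<close>, which is monotone in \<open>K\<close>.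
  If \<open>W\<^sub>K(A,A)\<close> is rotationally symmetric, it contains \<open>e\<^sup>i\<^sup>\<phi> \<parallel>A\<parallel>\<^sup>2\<close>, so
  \<open>\<langle>A, UAU\<^sup>*\<rangle> = e\<^sup>i\<^sup>\<phi> \<parallel>A\<parallel>\<^sup>2\<close> for some \<open>U \<in> K\<close>; as \<open>\<parallel>UAU\<^sup>*\<parallel> = \<parallel>A\<parallel>\<close>, this is
  the equality case of Cauchy-Schwarz for the Frobenius inner product, whence \<open>UAU\<^sup>* = e\<^sup>i\<^sup>\<phi> A\<close>.
  Conversely \<open>e\<^sup>i\<^sup>\<phi> A = VAV\<^sup>*\<close> with \<open>V \<in> K\<close> makes every \<open>UAU\<^sup>*\<close> rotate to \<open>(UV)A(UV)\<^sup>*\<close>.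
\<close>

definition matrix_scale :: "complex \<Rightarrow> complex^'n^'n \<Rightarrow> complex^'n^'n" where
  "matrix_scale c X = (\<chi> i j. c * X $ i $ j)"

lemma matrix_scale_1 [simp]: "matrix_scale 1 X = X"
  by (simp add: matrix_scale_def vec_eq_iff)

lemma matrix_scale_matrix_scale [simp]: "matrix_scale a (matrix_scale b X) = matrix_scale (a * b) X"
  by (simp add: matrix_scale_def vec_eq_iff mult.assoc)

lemma matrix_mult_matrix_scale_left: "matrix_scale c X ** Y = matrix_scale c (X ** Y)"
  by (simp add: matrix_scale_def vec_eq_iff matrix_matrix_mult_def sum_distrib_left mult.assoc)

lemma matrix_mult_matrix_scale_right: "X ** matrix_scale c Y = matrix_scale c (X ** Y)"
  by (simp add: matrix_scale_def vec_eq_iff matrix_matrix_mult_def sum_distrib_left mult.left_commute)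

lemma trace_matrix_scale: "trace (matrix_scale c X) = c * trace X"
  by (simp add: matrix_scale_def trace_def sum_distrib_left)

lemma ctrans_matrix_scale: "ctrans (matrix_scale c X) = matrix_scale (cnj c) (ctrans X)"
  by (simp add: matrix_scale_def ctrans_def vec_eq_iff)

lemma ctrans_ctrans [simp]: "ctrans (ctrans X) = X"
  by (simp add: ctrans_def vec_eq_iff)

lemma ctrans_mat_1 [simp]: "ctrans (mat 1) = mat 1"
  by (simp add: ctrans_def mat_def vec_eq_iff)

lemma ctrans_matrix_mult: "ctrans (X ** Y) = ctrans Y ** ctrans (X::complex^'n^'n)"
  by (simp add: ctrans_def vec_eq_iff matrix_matrix_mult_def mult.commute)

lemma trace_ctrans_mult: "trace (ctrans C ** X) = (\<Sum>i\<in>UNIV. \<Sum>k\<in>UNIV. cnj (C$k$i) * X$k$i)"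
  by (simp add: trace_def ctrans_def matrix_matrix_mult_def)

lemma Re_trace_ctrans_mult: "Re (trace (ctrans C ** X)) = inner C X"
proof -
  have "Re (trace (ctrans C ** X)) = (\<Sum>i\<in>UNIV. \<Sum>k\<in>UNIV. inner (C$k$i) (X$k$i))"
    by (simp add: trace_ctrans_mult inner_complex_def)
  also have "\<dots> = (\<Sum>k\<in>UNIV. \<Sum>i\<in>UNIV. inner (C$k$i) (X$k$i))"
    by (rule sum.swap)
  finally show ?thesis
    by (simp add: inner_vec_def)
qed

lemma trace_ctrans_mult_self: "trace (ctrans X ** X) = of_real ((norm X)\<^sup>2)"
proof -
  have "(\<Sum>i\<in>UNIV. \<Sum>k\<in>UNIV. (norm (X$k$i))\<^sup>2) = (\<Sum>k\<in>UNIV. \<Sum>i\<in>UNIV. inner (X$k$i) (X$k$i))"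
    unfolding dot_square_norm by (rule sum.swap)
  also have "\<dots> = (norm X)\<^sup>2"
    by (simp add: inner_vec_def flip: dot_square_norm)
  finally have "(norm X)\<^sup>2 = (\<Sum>i\<in>UNIV. \<Sum>k\<in>UNIV. (norm (X$k$i))\<^sup>2)" ..
  then show ?thesis
    by (simp add: trace_ctrans_mult mult.commute flip: complex_norm_square)
qed

lemma trace_unitary_conj:
  assumes "U \<in> unitary_group"
  shows "trace (U ** M ** ctrans U) = trace M"
proof -
  have "trace (U ** M ** ctrans U) = trace (ctrans U ** (U ** M))"
    using trace_mul_sym by blast
  also have "\<dots> = trace M"
    using assms by (simp add: unitary_group_def matrix_mul_assoc)
  finally show ?thesis .
qed

lemma norm_unitary_conj:
  assumes "U \<in> unitary_group"
  shows "norm (U ** A ** ctrans U) = norm A"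
proof -
  have "ctrans (U ** A ** ctrans U) ** (U ** A ** ctrans U)
      = U ** (ctrans A ** ((ctrans U ** U) ** A)) ** ctrans U"
    by (simp add: ctrans_matrix_mult matrix_mul_assoc)
  also have "\<dots> = U ** (ctrans A ** A) ** ctrans U"
    using assms by (simp add: unitary_group_def)
  finally have "trace (ctrans (U ** A ** ctrans U) ** (U ** A ** ctrans U)) = trace (ctrans A ** A)"
    using trace_unitary_conj[OF assms] by simp
  then have "(norm (U ** A ** ctrans U))\<^sup>2 = (norm A)\<^sup>2"
    by (simp only: trace_ctrans_mult_self of_real_eq_iff)
  then show ?thesis
    by (simp add: power2_eq_iff_nonneg)
qed

lemma norm_matrix_scale: "norm (matrix_scale c X) = norm c * norm X"
proof -
  have "complex_of_real ((norm (matrix_scale c X))\<^sup>2) = c * cnj c * trace (ctrans X ** X)"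
    by (simp only: trace_ctrans_mult_self[symmetric] ctrans_matrix_scale trace_matrix_scale
        matrix_mult_matrix_scale_left matrix_mult_matrix_scale_right matrix_scale_matrix_scale)
  also have "\<dots> = complex_of_real ((norm c * norm X)\<^sup>2)"
    by (simp only: trace_ctrans_mult_self complex_norm_square power_mult_distrib of_real_mult mult.commute)
  finally have "(norm (matrix_scale c X))\<^sup>2 = (norm c * norm X)\<^sup>2"
    by (simp only: of_real_eq_iff)
  then show ?thesis
    by (simp add: power2_eq_iff_nonneg)
qed

lemma eq_if_norm_eq_inner_eq_norm_square:
  fixes x y :: "'a::real_inner"
  assumes "norm x = norm y" and "inner y x = (norm y)\<^sup>2"
  shows "x = y"
proof -
  have "(norm (x - y))\<^sup>2 = (norm x)\<^sup>2 - 2 * inner y x + (norm y)\<^sup>2"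
    by (simp add: power2_norm_eq_inner inner_diff inner_commute)
  then show ?thesis
    using assms by simp
qed

lemma image_eq_if_inverse_image_subset:
  assumes "f ` S \<subseteq> S" and "g ` S \<subseteq> S" and "\<And>x. f (g x) = x"
  shows "f ` S = S"
proof -
  have "S = f ` g ` S"
    using assms(3) by (simp add: image_image)
  also have "\<dots> \<subseteq> f ` S"
    using assms(2) by blast
  finally show ?thesis
    using assms(1) by blast
qed

lemma rot_symmetric_iff_subset: "rot_symmetric W \<longleftrightarrow> (\<forall>\<phi>. (\<lambda>z. cis \<phi> * z) ` W \<subseteq> W)"
  unfolding rot_symmetric_def
  by (metis (no_types) image_eq_if_inverse_image_subset cis_mult add.right_inverse cis_zero
      mult.assoc mult_1 order_refl)

lemma weakly_rot_symmetric_orbit_iff_subset: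
  "weakly_rot_symmetric_orbit Orb \<longleftrightarrow> (\<forall>\<phi>. matrix_scale (cis \<phi>) ` Orb \<subseteq> Orb)"
proof -
  have "matrix_scale (cis \<phi>) (matrix_scale (cis (- \<phi>)) X) = X" for \<phi> X
    by (simp add: cis_mult)
  then show ?thesis
    unfolding weakly_rot_symmetric_orbit_def matrix_scale_def[symmetric, abs_def]
    by (metis image_eq_if_inverse_image_subset order_refl)
qed

definition phases_in_orbit :: "(complex^'n^'n) set \<Rightarrow> complex^'n^'n \<Rightarrow> bool" where
  "phases_in_orbit K A \<longleftrightarrow> (\<forall>\<phi>. matrix_scale (cis \<phi>) A \<in> orbit_K K A)"

lemma orbit_K_mono: "K \<subseteq> K' \<Longrightarrow> orbit_K K A \<subseteq> orbit_K K' A"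
  unfolding orbit_K_def by blast

lemma phases_in_orbit_mono: "K \<subseteq> K' \<Longrightarrow> phases_in_orbit K A \<Longrightarrow> phases_in_orbit K' A"
  unfolding phases_in_orbit_def using orbit_K_mono by blast

lemma self_in_orbit_K: "mat 1 \<in> K \<Longrightarrow> A \<in> orbit_K K A"
  unfolding orbit_K_def by (auto intro!: exI[of _ "mat 1"])

lemma matrix_scale_in_orbit_K:
  assumes mult_closed: "\<forall>U\<in>K. \<forall>V\<in>K. U ** V \<in> K"
    and "phases_in_orbit K A" and "X \<in> orbit_K K A"
  shows "matrix_scale (cis \<phi>) X \<in> orbit_K K A"
proof -
  obtain U where U: "U \<in> K" and X: "X = U ** A ** ctrans U"
    using assms(3) unfolding orbit_K_def by blast
  obtain V where V: "V \<in> K" and A: "matrix_scale (cis \<phi>) A = V ** A ** ctrans V"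
    using assms(2) unfolding phases_in_orbit_def orbit_K_def by blast
  have "matrix_scale (cis \<phi>) X = U ** matrix_scale (cis \<phi>) A ** ctrans U"
    by (simp add: X matrix_mult_matrix_scale_left matrix_mult_matrix_scale_right)
  also have "\<dots> = (U ** V) ** A ** ctrans (U ** V)"
    by (simp add: A ctrans_matrix_mult matrix_mul_assoc)
  finally show ?thesis
    unfolding orbit_K_def using mult_closed U V by blast
qed

lemma weakly_rot_symmetric_orbit_iff_phases_in_orbit:
  assumes "mat 1 \<in> K" and "\<forall>U\<in>K. \<forall>V\<in>K. U ** V \<in> K"
  shows "weakly_rot_symmetric_orbit (orbit_K K A) \<longleftrightarrow> phases_in_orbit K A"
  unfolding weakly_rot_symmetric_orbit_iff_subset
  using matrix_scale_in_orbit_K[OF assms(2)] self_in_orbit_K[OF assms(1)]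
  unfolding phases_in_orbit_def by blast

lemma W_K_eq_image_orbit_K: "W_K K C A = (\<lambda>X. trace (ctrans C ** X)) ` orbit_K K A"
proof -
  have "trace (ctrans C ** U ** A ** ctrans U) = trace (ctrans C ** (U ** A ** ctrans U))" for U
    by (simp add: matrix_mul_assoc)
  then show ?thesis
    unfolding W_K_def orbit_K_def image_Collect by auto
qed

lemma rot_symmetric_W_K_if_phases_in_orbit:
  assumes "\<forall>U\<in>K. \<forall>V\<in>K. U ** V \<in> K" and "phases_in_orbit K A"
  shows "rot_symmetric (W_K K C A)"
proof -
  have "cis \<phi> * trace (ctrans C ** X) = trace (ctrans C ** matrix_scale (cis \<phi>) X)" for \<phi> X
    by (simp add: matrix_mult_matrix_scale_right trace_matrix_scale)
  then show ?thesis
    unfolding rot_symmetric_iff_subset W_K_eq_image_orbit_K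
    using matrix_scale_in_orbit_K[OF assms] by auto
qed

lemma phases_in_orbit_if_rot_symmetric_W_K_self:
  assumes "mat 1 \<in> K" and "K \<subseteq> unitary_group" and "rot_symmetric (W_K K A A)"
  shows "phases_in_orbit K A"
  unfolding phases_in_orbit_def
proof
  fix \<phi> :: real
  define c where "c = cis \<phi>"
  have "trace (ctrans A ** A) \<in> W_K K A A"
    using self_in_orbit_K[OF assms(1)] unfolding W_K_eq_image_orbit_K by blast
  then have "c * of_real ((norm A)\<^sup>2) \<in> W_K K A A"
    using assms(3) unfolding rot_symmetric_def c_def trace_ctrans_mult_self by blast
  then obtain U where U: "U \<in> K"
    and trace_eq: "trace (ctrans A ** (U ** A ** ctrans U)) = c * of_real ((norm A)\<^sup>2)"
    unfolding W_K_eq_image_orbit_K orbit_K_def image_Collect by auto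
  have norm_c: "norm c = 1" and cnj_c: "cnj c * c = 1"
    unfolding c_def by (simp_all add: cis_cnj cis_mult)
  have norm_eq: "norm (U ** A ** ctrans U) = norm (matrix_scale c A)"
    using U assms(2) by (auto simp: norm_unitary_conj norm_matrix_scale norm_c)
  have "inner (matrix_scale c A) (U ** A ** ctrans U)
      = Re (trace (ctrans (matrix_scale c A) ** (U ** A ** ctrans U)))"
    by (rule Re_trace_ctrans_mult[symmetric])
  also have "\<dots> = Re (cnj c * trace (ctrans A ** (U ** A ** ctrans U)))"
    by (simp only: ctrans_matrix_scale matrix_mult_matrix_scale_left trace_matrix_scale)
  also have "\<dots> = Re (cnj c * c * of_real ((norm A)\<^sup>2))"
    by (simp only: trace_eq mult.assoc)
  also have "\<dots> = (norm (matrix_scale c A))\<^sup>2"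
    by (simp add: cnj_c norm_matrix_scale norm_c)
  finally have "U ** A ** ctrans U = matrix_scale c A"
    using norm_eq by (rule eq_if_norm_eq_inner_eq_norm_square[rotated])
  then show "matrix_scale (cis \<phi>) A \<in> orbit_K K A"
    unfolding orbit_K_def c_def using U by force
qed

lemma all_rot_symmetric_W_K_iff_phases_in_orbit:
  assumes "compact_connected_subgroup K"
  shows "(\<forall>C. rot_symmetric (W_K K C A)) \<longleftrightarrow> phases_in_orbit K A"
  using assms rot_symmetric_W_K_if_phases_in_orbit phases_in_orbit_if_rot_symmetric_W_K_self
  unfolding compact_connected_subgroup_def by blast

theorem corollary2p14:
  fixes K K' :: "(complex^'n^'n) set" and A :: "complex^'n^'n"
  assumes "compact_connected_subgroup K"
    and "compact_connected_subgroup K'"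
    and "K \<subseteq> K'"
  shows "((\<forall>C. rot_symmetric (W_K K C A)) \<longleftrightarrow> weakly_rot_symmetric_orbit (orbit_K K A))
       \<and> ((\<forall>C. rot_symmetric (W_K K C A)) \<longrightarrow> (\<forall>C. rot_symmetric (W_K K' C A)))"
proof -
  have "mat 1 \<in> K" and "\<forall>U\<in>K. \<forall>V\<in>K. U ** V \<in> K"
    using assms(1) unfolding compact_connected_subgroup_def by auto
  then have "weakly_rot_symmetric_orbit (orbit_K K A) \<longleftrightarrow> phases_in_orbit K A"
    by (rule weakly_rot_symmetric_orbit_iff_phases_in_orbit)
  moreover have "phases_in_orbit K A \<Longrightarrow> phases_in_orbit K' A"
    by (rule phases_in_orbit_mono[OF assms(3)])
  ultimately show ?thesis
    using all_rot_symmetric_W_K_iff_phases_in_orbit[OF assms(1)]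
      all_rot_symmetric_W_K_iff_phases_in_orbit[OF assms(2)] by blast
qed

end
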